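(* Let $m\ge3$ be odd and $n\ge2$. Every completely positive tensor $\mathcal{A}\in S_{m,n}$ is a strongly SOS tensor.
   Context: $S_{m,n}$ is the set of real symmetric $m$th order $n$-dimensional tensors. For $\mathbf{u}\in\mathbb{R}^n$, $\mathbf{u}^m$ is the tensor with entries $u_{i_1}\cdots u_{i_m}$. A tensor is completely positive if it equals $\sum_{l=1}^r(\mathbf{u}^{(l)})^m$ for some positive integer $r$ and nonnegative vectors $\mathbf{u}^{(l)}\in\mathbb{R}^n$. For $\mathbf{x}\in\mathbb{R}^n$ let $F_i(\mathbf{x})=\sum_{i_2,\dots,i_m=1}^n a_{ii_2\dots i_m}x_{i_2}\cdots x_{i_m}$. For odd $m$, $\mathcal{A}\in S_{m,n}$ is a strongly SOS tensor if each $F_i$, $i=1,\dots,n$, is a sum of squares of real polynomials. *)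

theory Defs
  imports Complex_Main "HOL-Library.Multiset"
begin

text \<open>Tensors of order m and dimension n are represented as functions on index lists
  (indices 0..n-1); only lists of length m with entries < n are relevant.
  Vectors in R^n are functions nat => real, of which only coordinates 0..n-1 matter.\<close>

definition index_lists :: "nat \<Rightarrow> nat \<Rightarrow> nat list set" where
  "index_lists k n = {is. length is = k \<and> set is \<subseteq> {..<n}}"

definition symmetric_tensor :: "nat \<Rightarrow> nat \<Rightarrow> (nat list \<Rightarrow> real) \<Rightarrow> bool" where
  "symmetric_tensor m n A \<longleftrightarrow>
     (\<forall>is \<in> index_lists m n. \<forall>js \<in> index_lists m n. mset is = mset js \<longrightarrow> A is = A js)"

definition tensor_power :: "(nat \<Rightarrow> real) \<Rightarrow> nat list \<Rightarrow> real" where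
  "tensor_power u is = prod_list (map u is)"

definition completely_positive :: "nat \<Rightarrow> nat \<Rightarrow> (nat list \<Rightarrow> real) \<Rightarrow> bool" where
  "completely_positive m n A \<longleftrightarrow>
     (\<exists>r::nat. r > 0 \<and> (\<exists>u :: nat \<Rightarrow> nat \<Rightarrow> real.
        (\<forall>l<r. \<forall>i<n. u l i \<ge> 0) \<and>
        (\<forall>is \<in> index_lists m n. A is = (\<Sum>l<r. tensor_power (u l) is))))"

definition F_comp :: "nat \<Rightarrow> nat \<Rightarrow> (nat list \<Rightarrow> real) \<Rightarrow> nat \<Rightarrow> (nat \<Rightarrow> real) \<Rightarrow> real" where
  "F_comp m n A i x = (\<Sum>is \<in> index_lists (m - 1) n. A (i # is) * prod_list (map x is))"

inductive_set real_polys :: "nat \<Rightarrow> ((nat \<Rightarrow> real) \<Rightarrow> real) set" for n :: nat where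
  const: "(\<lambda>x. c) \<in> real_polys n"
| var: "i < n \<Longrightarrow> (\<lambda>x. x i) \<in> real_polys n"
| add: "p \<in> real_polys n \<Longrightarrow> q \<in> real_polys n \<Longrightarrow> (\<lambda>x. p x + q x) \<in> real_polys n"
| mult: "p \<in> real_polys n \<Longrightarrow> q \<in> real_polys n \<Longrightarrow> (\<lambda>x. p x * q x) \<in> real_polys n"

definition is_sos :: "nat \<Rightarrow> ((nat \<Rightarrow> real) \<Rightarrow> real) \<Rightarrow> bool" where
  "is_sos n f \<longleftrightarrow> (\<exists>qs. set qs \<subseteq> real_polys n \<and>
      (\<forall>x. f x = (\<Sum>q\<leftarrow>qs. (q x)^2)))"

definition strongly_sos_tensor :: "nat \<Rightarrow> nat \<Rightarrow> (nat list \<Rightarrow> real) \<Rightarrow> bool" where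
  "strongly_sos_tensor m n A \<longleftrightarrow> (\<forall>i<n. is_sos n (F_comp m n A i))"

end

theory Submission
  imports Defs
begin

(* Write A = \<Sum>_l u_l^m with nonnegative vectors u_l. Expanding the power of the linear form
   <u_l, x> gives F_i(x) = \<Sum>_l u_l(i) <u_l, x>^(m-1). As m - 1 = 2k is even and u_l(i) \<ge> 0,
   each summand is the square of the polynomial sqrt(u_l(i)) <u_l, x>^k. *)

lemma index_lists_0: "index_lists 0 n = {[]}"
  by (auto simp: index_lists_def)

lemma index_lists_Suc:
  "index_lists (Suc k) n = (\<lambda>(j, is). j # is) ` ({..<n} \<times> index_lists k n)"
  by (auto simp: index_lists_def image_iff length_Suc_conv)

lemma sum_index_lists_prod_list:
  fixes f :: "nat \<Rightarrow> 'a::comm_semiring_1"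
  shows "(\<Sum>is\<in>index_lists k n. prod_list (map f is)) = (\<Sum>j<n. f j) ^ k"
proof (induction k)
  case 0
  show ?case by (simp add: index_lists_0)
next
  case (Suc k)
  have inj: "inj_on (\<lambda>(j, is). j # is) ({..<n} \<times> index_lists k n)"
    by (auto simp: inj_on_def)
  have "(\<Sum>is\<in>index_lists (Suc k) n. prod_list (map f is))
      = (\<Sum>(j, is)\<in>{..<n} \<times> index_lists k n. f j * prod_list (map f is))"
    unfolding index_lists_Suc by (subst sum.reindex[OF inj]) (auto intro!: sum.cong)
  also have "\<dots> = (\<Sum>j<n. f j) * (\<Sum>is\<in>index_lists k n. prod_list (map f is))"
    by (simp add: sum.cartesian_product[symmetric] sum_product)
  finally show ?case
    using Suc.IH by simp
qed

lemma prod_list_map_mult: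
  fixes f g :: "'b \<Rightarrow> 'a::comm_monoid_mult"
  shows "prod_list (map (\<lambda>j. f j * g j) xs) = prod_list (map f xs) * prod_list (map g xs)"
  by (induction xs) (simp_all add: mult_ac)

lemma F_comp_cong:
  assumes "0 < m" "i < n" "\<And>is. is \<in> index_lists m n \<Longrightarrow> A is = B is"
  shows "F_comp m n A i = F_comp m n B i"
proof -
  have "i # is \<in> index_lists m n" if "is \<in> index_lists (m - 1) n" for "is"
    using that assms(1,2) by (auto simp: index_lists_def)
  then show ?thesis
    unfolding F_comp_def using assms(3) by (auto intro!: ext sum.cong)
qed

lemma F_comp_sum:
  "F_comp m n (\<lambda>is. \<Sum>l\<in>L. B l is) i x = (\<Sum>l\<in>L. F_comp m n (B l) i x)"
  unfolding F_comp_def by (simp add: sum_distrib_right sum.swap[where A = L])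

lemma F_comp_tensor_power:
  "F_comp m n (tensor_power u) i x = u i * (\<Sum>j<n. u j * x j) ^ (m - 1)"
proof -
  have "F_comp m n (tensor_power u) i x
      = u i * (\<Sum>is\<in>index_lists (m - 1) n. prod_list (map (\<lambda>j. u j * x j) is))"
    unfolding F_comp_def tensor_power_def
    by (simp add: prod_list_map_mult sum_distrib_left mult.assoc)
  then show ?thesis
    by (simp add: sum_index_lists_prod_list)
qed

lemma real_polys_sum:
  "(\<And>l. l \<in> L \<Longrightarrow> p l \<in> real_polys n) \<Longrightarrow> (\<lambda>x. \<Sum>l\<in>L. p l x) \<in> real_polys n"
proof (induction L rule: infinite_finite_induct)
  case (insert l L)
  then show ?case using real_polys.add[of "p l" n "\<lambda>x. \<Sum>l\<in>L. p l x"] by simp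
qed (simp_all add: real_polys.const)

lemma real_polys_power: "p \<in> real_polys n \<Longrightarrow> (\<lambda>x. p x ^ k) \<in> real_polys n"
proof (induction k)
  case 0
  then show ?case using real_polys.const[of 1] by simp
next
  case (Suc k)
  then show ?case using real_polys.mult[of p n "\<lambda>x. p x ^ k"] by simp
qed

lemma real_polys_linear_form: "(\<lambda>x. \<Sum>j<n. c j * x j) \<in> real_polys n"
  by (intro real_polys_sum real_polys.mult real_polys.const real_polys.var) simp

lemma is_sos_zero: "is_sos n (\<lambda>x. 0)"
  unfolding is_sos_def by (intro exI[of _ "[]"]) simp

lemma is_sos_add:
  assumes "is_sos n f" "is_sos n g"
  shows "is_sos n (\<lambda>x. f x + g x)"
proof -
  obtain ps qs where "set ps \<subseteq> real_polys n" "\<forall>x. f x = (\<Sum>p\<leftarrow>ps. (p x)\<^sup>2)"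
    and "set qs \<subseteq> real_polys n" "\<forall>x. g x = (\<Sum>q\<leftarrow>qs. (q x)\<^sup>2)"
    using assms unfolding is_sos_def by blast
  then show ?thesis
    unfolding is_sos_def by (intro exI[of _ "ps @ qs"]) auto
qed

lemma is_sos_sum:
  "(\<And>l. l \<in> L \<Longrightarrow> is_sos n (f l)) \<Longrightarrow> is_sos n (\<lambda>x. \<Sum>l\<in>L. f l x)"
proof (induction L rule: infinite_finite_induct)
  case (insert l L)
  then show ?case using is_sos_add[of n "f l" "\<lambda>x. \<Sum>l\<in>L. f l x"] by simp
qed (simp_all add: is_sos_zero)

lemma is_sos_square: "p \<in> real_polys n \<Longrightarrow> is_sos n (\<lambda>x. (p x)\<^sup>2)"
  unfolding is_sos_def by (intro exI[of _ "[p]"]) simp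

lemma is_sos_nonneg_mult_even_power:
  assumes "0 \<le> c" "p \<in> real_polys n"
  shows "is_sos n (\<lambda>x. c * p x ^ (2 * k))"
proof -
  have "(\<lambda>x. c * p x ^ (2 * k)) = (\<lambda>x. (sqrt c * p x ^ k)\<^sup>2)"
    using assms(1)
    by (simp add: fun_eq_iff power_mult_distrib power_mult[symmetric] mult.commute[of k 2])
  moreover have "(\<lambda>x. sqrt c * p x ^ k) \<in> real_polys n"
    using assms(2) by (intro real_polys.mult real_polys.const real_polys_power)
  ultimately show ?thesis
    by (simp add: is_sos_square)
qed

theorem theorem4p4:
  fixes m n :: nat and A :: "nat list \<Rightarrow> real"
  assumes "odd m" and "m \<ge> 3" and "n \<ge> 2"
    and "symmetric_tensor m n A"
    and "completely_positive m n A"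
  shows "strongly_sos_tensor m n A"
  unfolding strongly_sos_tensor_def
proof (intro allI impI)
  fix i assume "i < n"
  obtain r and u :: "nat \<Rightarrow> nat \<Rightarrow> real" where u_nonneg: "\<forall>l<r. \<forall>i<n. u l i \<ge> 0"
    and A_eq: "\<forall>is \<in> index_lists m n. A is = (\<Sum>l<r. tensor_power (u l) is)"
    using assms(5) unfolding completely_positive_def by blast
  obtain k where k: "m = 2 * k + 1"
    using assms(1) by (rule oddE)
  have "F_comp m n A i = F_comp m n (\<lambda>is. \<Sum>l<r. tensor_power (u l) is) i"
    using k \<open>i < n\<close> A_eq by (intro F_comp_cong) auto
  also have "\<dots> = (\<lambda>x. \<Sum>l<r. u l i * (\<Sum>j<n. u l j * x j) ^ (2 * k))"
    using k by (simp add: fun_eq_iff F_comp_sum F_comp_tensor_power)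
  finally have F_eq: "F_comp m n A i = (\<lambda>x. \<Sum>l<r. u l i * (\<Sum>j<n. u l j * x j) ^ (2 * k))" .
  have summand_sos: "is_sos n (\<lambda>x. u l i * (\<Sum>j<n. u l j * x j) ^ (2 * k))" if "l < r" for l
    using u_nonneg that \<open>i < n\<close>
    by (simp add: is_sos_nonneg_mult_even_power real_polys_linear_form)
  show "is_sos n (F_comp m n A i)"
    unfolding F_eq using summand_sos by (intro is_sos_sum) simp
qed

end
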